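(* Let $f:\mathbb{R}^n\to\mathbb{R}$ be twice continuously differentiable and strongly convex on $\mathbb{R}^n$, with $\nabla^2 f(x)$ invertible for all $x\in\mathbb{R}^n$ and $\|\nabla f(x)\|$ radially unbounded; let $x^*$ be its minimizer. Let $\mu>1$, $k>0$ and consider the ODE $$\dot x=-\big(\nabla^2 f(x)\big)^{-1}\left(k\frac{\nabla f(x)}{\|\nabla f(x)\|^{2/\mu}}+k\frac{\nabla f(x)}{\|\nabla f(x)\|^{-2/\mu}}\right).$$ Then the solution of this ODE exists and is unique for all $x(0)\in\mathbb{R}^n$. Furthermore, given a prescribed settling time $T_p>0$ and letting $k=\frac{\mu\pi}{4T_p}$, the trajectories of the ODE are fixed-time-stable to the optimal solution $x^*$ of $\min_{x\in\mathbb{R}^n}f(x)$ with settling time $T\le T_p$.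
   Context: An ODE is fixed-time-stable to an equilibrium if it is globally asymptotically Lyapunov stable, every trajectory reaches the equilibrium in finite time, and the settling-time function (time to reach the equilibrium) is bounded by a constant independent of the initial condition. *)

theory Defs
  imports "HOL-Analysis.Analysis"
begin

definition strongly_convex_on :: "'a::real_normed_vector set \<Rightarrow> ('a \<Rightarrow> real) \<Rightarrow> bool" where
  "strongly_convex_on S f \<longleftrightarrow> convex S \<and> (\<exists>m>0. \<forall>x\<in>S. \<forall>y\<in>S. \<forall>t\<in>{0..1}.
     f ((1 - t) *\<^sub>R x + t *\<^sub>R y) \<le> (1 - t) * f x + t * f y - m / 2 * t * (1 - t) * (norm (x - y))\<^sup>2)"

text \<open>At points where grad f x = 0 (i.e. at the minimiser) the field evaluates to 0
  by Isabelle's conventions (0 powr a = 0, a / 0 = 0).\<close>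
definition ft_newton_field ::
  "('a::euclidean_space \<Rightarrow> 'a) \<Rightarrow> ('a \<Rightarrow> 'a \<Rightarrow>\<^sub>L 'a) \<Rightarrow> real \<Rightarrow> real \<Rightarrow> 'a \<Rightarrow> 'a" where
  "ft_newton_field g H \<mu> k x =
     - inv (blinfun_apply (H x))
         ((k / (norm (g x) powr (2 / \<mu>))) *\<^sub>R g x + (k / (norm (g x) powr (- 2 / \<mu>))) *\<^sub>R g x)"

definition ode_solution :: "('a::euclidean_space \<Rightarrow> 'a) \<Rightarrow> 'a \<Rightarrow> (real \<Rightarrow> 'a) \<Rightarrow> bool" where
  "ode_solution F x0 x \<longleftrightarrow> x 0 = x0 \<and>
     (\<forall>t\<ge>0. (\<lambda>s. F (x s)) absolutely_integrable_on {0..t} \<and>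
             x t = x0 + integral {0..t} (\<lambda>s. F (x s)))"

definition fixed_time_stable :: "('a::euclidean_space \<Rightarrow> 'a) \<Rightarrow> 'a \<Rightarrow> real \<Rightarrow> bool" where
  "fixed_time_stable F xe Tp \<longleftrightarrow>
     (\<forall>\<epsilon>>0. \<exists>\<delta>>0. \<forall>x0 x. ode_solution F x0 x \<and> dist x0 xe < \<delta> \<longrightarrow> (\<forall>t\<ge>0. dist (x t) xe < \<epsilon>)) \<and>
     (\<forall>x0 x. ode_solution F x0 x \<longrightarrow> (x \<longlongrightarrow> xe) at_top) \<and>
     (\<forall>x0 x. ode_solution F x0 x \<longrightarrow> (\<exists>T. 0 \<le> T \<and> T \<le> Tp \<and> (\<forall>t\<ge>T. x t = xe)))"

end

(*
  Strong convexity makes the gradient g strongly monotone, hence (by invariance of domain) a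
  homeomorphism of the whole space, and it bounds the inverse Hessian by 1/m. Along a solution,
  z = g x obeys the radial equation z' = -k (|z| powr -a + |z| powr a) z with a = 2/mu: the
  direction of z is constant and arctan (|z| powr a) decreases at the constant rate a k until it
  reaches 0. So a solution is determined by its initial value, it reaches the minimiser (the only
  zero of g) before time pi / (2 a k) = mu pi / (4 k) and stays there, and pulling the explicit
  solution of the radial equation back through g gives existence.
*)
theory Submission
  imports Defs "HOL-Homology.Invariance_of_Domain"
begin

section \<open>Functions decaying linearly while positive\<close>

lemma DERIV_const_slope_end:
  fixes h :: "real \<Rightarrow> real"
  assumes "a < b" and "continuous_on {a..b} h"
    and der: "\<And>s. a < s \<Longrightarrow> s < b \<Longrightarrow> (h has_real_derivative -c) (at s)"
  shows "h b = h a - c * (b - a)"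
proof -
  have "(\<lambda>s. h s + c * s) b = (\<lambda>s. h s + c * s) a"
  proof (rule DERIV_isconst_end[OF \<open>a < b\<close>])
    show "continuous_on {a..b} (\<lambda>s. h s + c * s)" using assms(2) by (intro continuous_intros)
    fix s assume "a < s" "s < b"
    then show "((\<lambda>s. h s + c * s) has_real_derivative 0) (at s)"
      by (auto intro!: derivative_eq_intros der)
  qed
  then show ?thesis by (simp add: algebra_simps)
qed

lemma stays_zero_if_decreasing_while_positive:
  fixes h :: "real \<Rightarrow> real"
  assumes cont: "continuous_on {s0..t} h" and "s0 \<le> t"
    and nonneg: "\<And>s. s0 \<le> s \<Longrightarrow> s \<le> t \<Longrightarrow> h s \<ge> 0"
    and der: "\<And>s. s0 < s \<Longrightarrow> s < t \<Longrightarrow> h s > 0 \<Longrightarrow> (h has_real_derivative -c) (at s)"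
    and "c > 0" and "h s0 = 0"
  shows "h t = 0"
proof (rule ccontr)
  assume "h t \<noteq> 0"
  define Z where "Z = {s0..t} \<inter> h -` {0}"
  have "closed Z" unfolding Z_def by (rule continuous_closed_preimage[OF cont]) auto
  moreover have "s0 \<in> Z" "bdd_above Z" using assms unfolding Z_def by auto
  ultimately have "Sup Z \<in> Z" by (intro closed_contains_Sup) auto
  define s1 where "s1 = Sup Z"
  have s1: "s0 \<le> s1" "s1 < t" "h s1 = 0"
    using \<open>Sup Z \<in> Z\<close> \<open>h t \<noteq> 0\<close> unfolding Z_def s1_def by (auto simp: le_less)
  have pos: "h s > 0" if "s1 < s" "s \<le> t" for s
  proof -
    have "s \<notin> Z" using that cSup_upper[OF _ \<open>bdd_above Z\<close>, of s] unfolding s1_def by force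
    then show ?thesis using nonneg[of s] that s1 unfolding Z_def by force
  qed
  have "h t = h s1 - c * (t - s1)"
    using s1 by (intro DERIV_const_slope_end der pos continuous_on_subset[OF cont]) auto
  then have "h t < 0" using s1 \<open>c > 0\<close> by simp
  then show False using nonneg[of t] \<open>s0 \<le> t\<close> by simp
qed

lemma linear_decay_until_zero:
  fixes h :: "real \<Rightarrow> real"
  assumes cont: "continuous_on {0..t} h" and "0 \<le> t"
    and nonneg: "\<And>s. 0 \<le> s \<Longrightarrow> s \<le> t \<Longrightarrow> h s \<ge> 0"
    and der: "\<And>s. 0 < s \<Longrightarrow> s < t \<Longrightarrow> h s > 0 \<Longrightarrow> (h has_real_derivative -c) (at s)"
    and "c > 0"
  shows "h t = max 0 (h 0 - c * t)"
proof -
  define Z where "Z = {0..t} \<inter> h -` {0}"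
  show ?thesis
  proof (cases "Z = {}")
    case True
    then have pos: "h s > 0" if "0 \<le> s" "s \<le> t" for s
      using nonneg[OF that] that unfolding Z_def by force
    show ?thesis
    proof (cases "t = 0")
      case False
      then have "h t = h 0 - c * (t - 0)"
        using \<open>0 \<le> t\<close> by (intro DERIV_const_slope_end der pos cont) auto
      then show ?thesis using pos[of t] \<open>0 \<le> t\<close> by simp
    qed (use pos in auto)
  next
    case False
    have "closed Z" unfolding Z_def by (rule continuous_closed_preimage[OF cont]) auto
    moreover have "bdd_below Z" unfolding Z_def by auto
    ultimately have "Inf Z \<in> Z" using False by (intro closed_contains_Inf)
    define s0 where "s0 = Inf Z"
    have s0: "0 \<le> s0" "s0 \<le> t" "h s0 = 0" using \<open>Inf Z \<in> Z\<close> unfolding Z_def s0_def by auto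
    have pos: "h s > 0" if "0 \<le> s" "s < s0" for s
    proof -
      have "s \<notin> Z" using that cInf_lower[OF _ \<open>bdd_below Z\<close>, of s] unfolding s0_def by force
      then show ?thesis using nonneg[of s] that s0 unfolding Z_def by force
    qed
    have "h 0 = c * s0"
    proof (cases "s0 = 0")
      case False
      then have "h s0 = h 0 - c * (s0 - 0)"
        using s0 by (intro DERIV_const_slope_end der pos continuous_on_subset[OF cont]) auto
      then show ?thesis using s0 by simp
    qed (use s0 in simp)
    moreover have "h t = 0"
      using s0 \<open>c > 0\<close>
      by (intro stays_zero_if_decreasing_while_positive[of s0 t h c]
          continuous_on_subset[OF cont] nonneg der) auto
    ultimately show ?thesis using s0 \<open>c > 0\<close> by (simp add: mult_left_mono)
  qed
qed

section \<open>Strongly convex functions and strongly monotone maps\<close>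

lemma has_derivative_quotient_along_line:
  fixes f :: "'a::real_normed_vector \<Rightarrow> real"
  assumes "(f has_derivative f') (at x)"
  shows "((\<lambda>h. (f (x + h *\<^sub>R v) - f x) / h) \<longlongrightarrow> f' v) (at_right 0)"
proof -
  have "((\<lambda>h. x + h *\<^sub>R v) has_derivative (\<lambda>h. h *\<^sub>R v)) (at 0)"
    by (auto intro!: derivative_eq_intros)
  moreover have "(f has_derivative f') (at (x + 0 *\<^sub>R v))" using assms by simp
  ultimately have "((\<lambda>h. f (x + h *\<^sub>R v)) has_derivative (\<lambda>h. f' (h *\<^sub>R v))) (at 0)"
    using diff_chain_at by (fastforce simp: o_def)
  moreover have "f' (h *\<^sub>R v) = f' v * h" for h
    using has_derivative_bounded_linear[OF assms] by (simp add: linear_simps)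
  ultimately have "((\<lambda>h. f (x + h *\<^sub>R v)) has_real_derivative f' v) (at 0)"
    by (simp add: has_field_derivative_def)
  then show ?thesis by (auto simp: DERIV_def intro: tendsto_mono at_le)
qed

definition strongly_monotone :: "real \<Rightarrow> ('a::real_inner \<Rightarrow> 'a) \<Rightarrow> bool" where
  "strongly_monotone m g \<longleftrightarrow> m > 0 \<and> (\<forall>x y. m * (norm (x - y))\<^sup>2 \<le> (g x - g y) \<bullet> (x - y))"

lemma strongly_convex_on_UNIV_gradient_inequality:
  fixes f :: "'a::real_inner \<Rightarrow> real"
  assumes "strongly_convex_on UNIV f" and grad: "\<And>x. (f has_derivative (\<lambda>h. g x \<bullet> h)) (at x)"
  obtains m where "m > 0" "\<And>x y. f x + g x \<bullet> (y - x) + m / 2 * (norm (y - x))\<^sup>2 \<le> f y"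
proof -
  obtain m where "m > 0" and sc: "\<And>x y t. t \<in> {0..1} \<Longrightarrow>
     f ((1 - t) *\<^sub>R x + t *\<^sub>R y) \<le> (1 - t) * f x + t * f y - m / 2 * t * (1 - t) * (norm (x - y))\<^sup>2"
    using assms(1) unfolding strongly_convex_on_def by blast
  have "f x + g x \<bullet> (y - x) + m / 2 * (norm (y - x))\<^sup>2 \<le> f y" for x y
  proof -
    define bound where "bound h = f y - f x - m / 2 * (1 - h) * (norm (y - x))\<^sup>2" for h
    have "(f (x + h *\<^sub>R (y - x)) - f x) / h \<le> bound h" if "0 < h" "h < 1" for h
    proof -
      have "f (x + h *\<^sub>R (y - x))
          \<le> (1 - h) * f x + h * f y - m / 2 * h * (1 - h) * (norm (x - y))\<^sup>2"
        using sc[of h x y] that by (simp add: algebra_simps)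
      then show ?thesis
        using that
        by (simp add: bound_def divide_simps norm_minus_commute) (simp add: algebra_simps)
    qed
    moreover have "(bound \<longlongrightarrow> bound 0) (at_right 0)"
      unfolding bound_def by (intro tendsto_intros)
    ultimately have "g x \<bullet> (y - x) \<le> bound 0"
      by (intro tendsto_le[OF trivial_limit_at_right_real _
            has_derivative_quotient_along_line[OF grad]])
         (auto simp: eventually_at_right_field intro!: exI[of _ 1])
    then show ?thesis by (simp add: bound_def)
  qed
  with \<open>m > 0\<close> that show ?thesis by blast
qed

lemma strongly_convex_on_UNIV_imp_strongly_monotone_gradient:
  fixes f :: "'a::real_inner \<Rightarrow> real"
  assumes "strongly_convex_on UNIV f" and "\<And>x. (f has_derivative (\<lambda>h. g x \<bullet> h)) (at x)"
  obtains m where "strongly_monotone m g"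
proof -
  obtain m where "m > 0" and ineq: "\<And>x y. f x + g x \<bullet> (y - x) + m / 2 * (norm (y - x))\<^sup>2 \<le> f y"
    using strongly_convex_on_UNIV_gradient_inequality[OF assms] by blast
  have "m * (norm (x - y))\<^sup>2 \<le> (g x - g y) \<bullet> (x - y)" for x y
    using ineq[of x y] ineq[of y x]
    by (simp add: norm_minus_commute inner_diff_left inner_diff_right inner_commute)
  then show ?thesis using \<open>m > 0\<close> that unfolding strongly_monotone_def by blast
qed

lemma strongly_monotone_norm_diff_lower_bound:
  assumes "strongly_monotone m g"
  shows "m * norm (x - y) \<le> norm (g x - g y)"
proof (cases "x = y")
  case False
  have "m * (norm (x - y))\<^sup>2 \<le> norm (g x - g y) * norm (x - y)"
    using assms norm_cauchy_schwarz[of "g x - g y" "x - y"] unfolding strongly_monotone_def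
    by (smt (verit))
  then show ?thesis using False by (simp add: power2_eq_square)
qed simp

lemma strongly_monotone_imp_inj:
  assumes "strongly_monotone m g"
  shows "inj g"
proof (rule injI)
  fix x y assume "g x = g y"
  then have "m * norm (x - y) \<le> 0"
    using strongly_monotone_norm_diff_lower_bound[OF assms, of x y] by simp
  then show "x = y" using assms by (simp add: strongly_monotone_def mult_le_0_iff)
qed

lemma strongly_monotone_derivative_lower_bound:
  assumes "strongly_monotone m g" and "(g has_derivative g') (at y)"
  shows "m * norm v \<le> norm (g' v)"
proof -
  have "((\<lambda>z. g z \<bullet> v) has_derivative (\<lambda>w. g' w \<bullet> v)) (at y)"
    using assms(2) by (auto intro!: derivative_eq_intros)
  note quotient = has_derivative_quotient_along_line[OF this, of v]
  have "m * (norm v)\<^sup>2 \<le> (g (y + h *\<^sub>R v) \<bullet> v - g y \<bullet> v) / h" if "0 < h" for h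
  proof -
    have "m * (norm (h *\<^sub>R v))\<^sup>2 \<le> (g (y + h *\<^sub>R v) - g y) \<bullet> (h *\<^sub>R v)"
      using assms(1) unfolding strongly_monotone_def by (metis add_diff_cancel_left')
    then have "h * (m * (norm v)\<^sup>2 * h) \<le> h * (g (y + h *\<^sub>R v) \<bullet> v - g y \<bullet> v)"
      by (simp add: power_mult_distrib inner_diff_left) (simp add: power2_eq_square algebra_simps)
    then show ?thesis
      using that by (simp add: pos_le_divide_eq)
  qed
  then have "m * (norm v)\<^sup>2 \<le> g' v \<bullet> v"
    by (intro tendsto_le[OF trivial_limit_at_right_real quotient tendsto_const])
       (auto simp: eventually_at_right_field intro!: exI[of _ 1])
  also have "\<dots> \<le> norm (g' v) * norm v" by (rule norm_cauchy_schwarz)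
  finally show ?thesis by (cases "v = 0") (auto simp: power2_eq_square)
qed

lemma strongly_monotone_continuous_imp_surj:
  fixes g :: "'a::euclidean_space \<Rightarrow> 'a"
  assumes mono: "strongly_monotone m g" and cont: "continuous_on UNIV g"
  shows "surj g"
proof -
  have "open (range g)"
    using invariance_of_domain[OF cont open_UNIV] strongly_monotone_imp_inj[OF mono] by simp
  moreover have "closed (range g)"
    unfolding closed_sequential_limits
  proof (intro allI impI)
    fix z l assume z: "(\<forall>n. z n \<in> range g) \<and> z \<longlonglongrightarrow> l"
    define p where "p n = inv_into UNIV g (z n)" for n
    have zp: "z n = g (p n)" for n using z by (simp add: p_def f_inv_into_f)
    have "Cauchy p"
    proof (rule metric_CauchyI)
      fix e :: real assume "e > 0"
      moreover have "Cauchy z" using z LIMSEQ_imp_Cauchy by blast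
      ultimately obtain M where M: "\<And>i j. i \<ge> M \<Longrightarrow> j \<ge> M \<Longrightarrow> dist (z i) (z j) < m * e"
        using mono unfolding Cauchy_def strongly_monotone_def by (meson mult_pos_pos)
      have "m * dist (p i) (p j) < m * e" if "i \<ge> M" "j \<ge> M" for i j
        using M[OF that] strongly_monotone_norm_diff_lower_bound[OF mono, of "p i" "p j"]
        by (simp add: dist_norm zp)
      then show "\<exists>M. \<forall>i\<ge>M. \<forall>j\<ge>M. dist (p i) (p j) < e"
        using mono by (auto simp: strongly_monotone_def)
    qed
    then obtain q where "p \<longlonglongrightarrow> q" using Cauchy_convergent_iff convergent_def by blast
    then have "z \<longlonglongrightarrow> g q"
      unfolding zp by (intro continuous_on_tendsto_compose[OF cont]) auto
    then show "l \<in> range g" using z LIMSEQ_unique by blast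
  qed
  ultimately show ?thesis using clopen[of "range g"] by auto
qed

section \<open>Radial motions\<close>

lemma scaleR_norm_sgn: "norm x *\<^sub>R sgn x = x"
  by (cases "x = 0") (simp_all add: sgn_div_norm)

lemma norm_has_real_derivative_radial:
  fixes z :: "real \<Rightarrow> 'a::real_inner"
  assumes "(z has_vector_derivative c *\<^sub>R z t) (at t)" and "z t \<noteq> 0"
  shows "((\<lambda>s. norm (z s)) has_real_derivative c * norm (z t)) (at t)"
proof -
  have D: "((norm \<circ> z) has_derivative (\<lambda>h. (h *\<^sub>R c *\<^sub>R z t) \<bullet> sgn (z t))) (at t)"
    using diff_chain_at[OF assms(1)[unfolded has_vector_derivative_def]
        has_derivative_norm[OF assms(2)]]
    by (simp add: o_def)
  have "z t \<bullet> sgn (z t) = norm (z t)"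
    using assms(2) by (simp add: sgn_div_norm power2_norm_eq_inner[symmetric] power2_eq_square)
  then show ?thesis
    unfolding has_field_derivative_def
    by (intro has_derivative_eq_rhs[OF D[unfolded o_def]]) (simp add: fun_eq_iff)
qed

lemma sgn_has_vector_derivative_radial:
  fixes z :: "real \<Rightarrow> 'a::real_inner"
  assumes "(z has_vector_derivative c *\<^sub>R z t) (at t)" and "z t \<noteq> 0"
  shows "((\<lambda>s. sgn (z s)) has_vector_derivative 0) (at t)"
proof -
  have "((\<lambda>s. inverse (norm (z s))) has_real_derivative
      - (c * norm (z t) * inverse (norm (z t) ^ 2))) (at t)"
    using DERIV_inverse_fun[OF norm_has_real_derivative_radial[OF assms]] assms(2)
    by (simp add: power2_eq_square)
  from has_vector_derivative_scaleR[OF this assms(1)]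
  have "((\<lambda>s. inverse (norm (z s)) *\<^sub>R z s) has_vector_derivative 0) (at t)"
    using assms(2) by (simp add: power2_eq_square field_simps)
  then show ?thesis by (simp add: sgn_div_norm divide_inverse_commute)
qed

section \<open>The fixed-time Newton flow\<close>

locale newton_flow =
  fixes g :: "'a::euclidean_space \<Rightarrow> 'a"
    and H :: "'a \<Rightarrow> 'a \<Rightarrow>\<^sub>L 'a"
    and m :: real
    and \<mu> :: real
    and xs :: 'a
  assumes hess: "\<And>x. (g has_derivative blinfun_apply (H x)) (at x)"
    and hess_cont: "continuous_on UNIV H"
    and hess_inv: "\<And>x. bij (blinfun_apply (H x))"
    and mono: "strongly_monotone m g"
    and root: "g xs = 0"
    and mu_pos: "\<mu> > 0"
begin

lemma m_pos: "m > 0"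
  using mono by (simp add: strongly_monotone_def)

lemma continuous_on_g: "continuous_on UNIV g"
  using hess has_derivative_continuous continuous_at_imp_continuous_on by blast

lemma inj_g: "inj g"
  using mono by (rule strongly_monotone_imp_inj)

lemma surj_g: "surj g"
  using mono continuous_on_g by (rule strongly_monotone_continuous_imp_surj)

lemma g_eq_0_iff: "g y = 0 \<longleftrightarrow> y = xs"
  using inj_g root by (metis injD)

abbreviation Hinv :: "'a \<Rightarrow> 'a \<Rightarrow> 'a" where
  "Hinv y \<equiv> inv_into UNIV (blinfun_apply (H y))"

lemma H_Hinv [simp]: "blinfun_apply (H y) (Hinv y w) = w"
  using hess_inv[of y] by (simp add: bij_is_surj surj_f_inv_f)

lemma Hinv_H [simp]: "Hinv y (blinfun_apply (H y) v) = v"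
  using hess_inv[of y] by (simp add: bij_is_inj inv_f_f)

lemma linear_Hinv: "linear (Hinv y)"
  using hess_inv[of y] blinfun.bounded_linear_right[THEN bounded_linear.linear]
  by (intro inj_linear_imp_inv_linear) (auto simp: bij_def)

lemma norm_Hinv_le: "norm (Hinv y w) \<le> norm w / m"
  using strongly_monotone_derivative_lower_bound[OF mono hess[of y], of "Hinv y w"] m_pos
  by (simp add: field_simps)

lemma tendsto_Hinv:
  assumes w: "(w \<longlongrightarrow> w y) (at y)"
  shows "((\<lambda>y'. Hinv y' (w y')) \<longlongrightarrow> Hinv y (w y)) (at y)"
proof -
  define v where "v = Hinv y (w y)"
  have bound: "norm (Hinv y' (w y') - v)
      \<le> norm (w y' - w y) / m + norm (H y - H y') * norm v / m" for y'
  proof -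
    have "Hinv y' (w y') - v = Hinv y' (w y' - w y) + Hinv y' (blinfun_apply (H y - H y') v)"
      using linear_Hinv[of y'] by (simp add: v_def linear_diff blinfun.diff_left)
    also have "norm \<dots> \<le> norm (w y' - w y) / m + norm (blinfun_apply (H y - H y') v) / m"
      by (intro norm_triangle_le add_mono norm_Hinv_le)
    also have "norm (blinfun_apply (H y - H y') v) \<le> norm (H y - H y') * norm v"
      by (rule norm_blinfun)
    finally show ?thesis using m_pos by (simp add: divide_right_mono)
  qed
  have "(H \<longlongrightarrow> H y) (at y)" using hess_cont by (simp add: continuous_on_def)
  then have "((\<lambda>y'. norm (w y' - w y) / m + norm (H y - H y') * norm v / m)
      \<longlongrightarrow> norm (w y - w y) / m + norm (H y - H y) * norm v / m) (at y)"
    using w m_pos by (intro tendsto_intros) auto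
  then have "((\<lambda>y'. Hinv y' (w y') - v) \<longlongrightarrow> 0) (at y)"
    by (intro Lim_null_comparison[OF always_eventually[OF allI[OF bound]]]) simp
  then show ?thesis by (simp add: v_def Lim_null[symmetric])
qed

definition \<alpha> :: real where "\<alpha> = 2 / \<mu>"

lemma alpha_pos: "\<alpha> > 0"
  using mu_pos by (simp add: \<alpha>_def)

definition gain :: "real \<Rightarrow> real \<Rightarrow> real" where
  "gain k r = k / r powr \<alpha> + k * r powr \<alpha>"

abbreviation F :: "real \<Rightarrow> 'a \<Rightarrow> 'a" where
  "F k \<equiv> ft_newton_field g H \<mu> k"

lemma F_eq: "F k y = - Hinv y (gain k (norm (g y)) *\<^sub>R g y)"
proof -
  have "k / norm (g y) powr (- 2 / \<mu>) = k * norm (g y) powr \<alpha>"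
    by (cases "g y = 0") (simp_all add: \<alpha>_def powr_minus divide_inverse)
  then show ?thesis
    unfolding ft_newton_field_def gain_def by (simp add: scaleR_add_left \<alpha>_def)
qed

lemma isCont_F:
  assumes "y \<noteq> xs"
  shows "isCont (F k) y"
proof -
  have "isCont g y" using continuous_on_g by (simp add: continuous_on_eq_continuous_at)
  then have "((\<lambda>y'. gain k (norm (g y')) *\<^sub>R g y') \<longlongrightarrow> gain k (norm (g y)) *\<^sub>R g y) (at y)"
    using assms alpha_pos g_eq_0_iff unfolding gain_def isCont_def by (intro tendsto_intros) auto
  then show ?thesis
    unfolding isCont_def F_eq
    by (intro tendsto_minus tendsto_Hinv[where w = "\<lambda>y'. gain k (norm (g y')) *\<^sub>R g y'"])
qed

lemma ode_solution_integrable: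
  assumes "ode_solution (F k) x0 y" and "0 \<le> T"
  shows "(\<lambda>s. F k (y s)) integrable_on {0..T}"
  using assms unfolding ode_solution_def absolutely_integrable_on_def by blast

lemma ode_solution_continuous:
  assumes sol: "ode_solution (F k) x0 y"
  shows "continuous_on {0..T} y"
proof (cases "0 \<le> T")
  case True
  have "continuous_on {0..T} (\<lambda>t. x0 + integral {0..t} (\<lambda>s. F k (y s)))"
    by (intro continuous_intros indefinite_integral_continuous_1
        ode_solution_integrable[OF sol True])
  then show ?thesis
    by (rule continuous_on_eq) (use sol in \<open>auto simp: ode_solution_def\<close>)
qed simp

lemma ode_solution_has_vector_derivative:
  assumes sol: "ode_solution (F k) x0 y" and "0 < t" and "y t \<noteq> xs"
  shows "(y has_vector_derivative F k (y t)) (at t)"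
proof -
  define T where "T = t + 1"
  have "continuous (at t within {0..T}) y"
    using ode_solution_continuous[OF sol, of T] \<open>0 < t\<close>
    by (simp add: continuous_on_eq_continuous_within T_def)
  from continuous_within_compose3[OF isCont_F[OF \<open>y t \<noteq> xs\<close>] this]
  have "continuous (at t within {0..T} - {}) (\<lambda>s. F k (y s))" by simp
  then have "((\<lambda>u. integral {0..u} (\<lambda>s. F k (y s))) has_vector_derivative F k (y t))
      (at t within {0..T} - {})"
    using \<open>0 < t\<close>
    by (intro integral_has_vector_derivative_continuous_at ode_solution_integrable[OF sol])
       (auto simp: T_def)
  then have "((\<lambda>u. integral {0..u} (\<lambda>s. F k (y s)) + x0) has_vector_derivative F k (y t)) (at t)"
    using at_within_Icc_at[of 0 t T] \<open>0 < t\<close> by (simp add: T_def has_vector_derivative_add_const)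
  then show ?thesis
  proof (rule has_vector_derivative_transform_within_open)
    show "open {0<..<T}" "t \<in> {0<..<T}" using \<open>0 < t\<close> by (auto simp: T_def)
  qed (use sol in \<open>auto simp: ode_solution_def add.commute\<close>)
qed

lemma gradient_has_vector_derivative_along_solution:
  assumes "(y has_vector_derivative F k (y t)) (at t)"
  shows "((\<lambda>s. g (y s)) has_vector_derivative (- gain k (norm (g (y t)))) *\<^sub>R g (y t)) (at t)"
  using diff_chain_at[OF assms[unfolded has_vector_derivative_def] hess]
  by (simp add: has_vector_derivative_def o_def F_eq blinfun.scaleR_right blinfun.minus_right)

definition potential :: "'a \<Rightarrow> real" where
  "potential z = arctan (norm z powr \<alpha>)"

lemma potential_pos_iff: "potential z > 0 \<longleftrightarrow> z \<noteq> 0"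
  by (simp add: potential_def)

lemma continuous_on_potential: "continuous_on UNIV potential"
  unfolding potential_def using alpha_pos by (intro continuous_intros continuous_on_powr') auto

lemma potential_nonneg: "potential z \<ge> 0"
  by (simp add: potential_def)

lemma potential_le_iff: "potential z \<le> potential w \<longleftrightarrow> norm z \<le> norm w"
proof -
  have "norm z powr \<alpha> \<le> norm w powr \<alpha> \<longleftrightarrow> norm z \<le> norm w"
    using alpha_pos by (meson norm_ge_zero not_le powr_less_mono2 powr_mono2 less_imp_le)
  then show ?thesis by (simp add: potential_def arctan_le_iff)
qed

lemma tan_potential_powr: "tan (potential z) powr (1 / \<alpha>) = norm z"
  using alpha_pos by (simp add: potential_def tan_arctan powr_powr)

lemma potential_has_real_derivative_along_solution:
  assumes "(y has_vector_derivative F k (y t)) (at t)" and "y t \<noteq> xs"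
  shows "((\<lambda>s. potential (g (y s))) has_real_derivative - (\<alpha> * k)) (at t)"
proof -
  let ?r = "norm (g (y t))"
  let ?p = "?r powr \<alpha>"
  have r: "?r > 0" using assms(2) g_eq_0_iff by simp
  have norm': "((\<lambda>s. norm (g (y s))) has_real_derivative - gain k ?r * ?r) (at t)"
    using r norm_has_real_derivative_radial[OF
        gradient_has_vector_derivative_along_solution[OF assms(1)]]
    by simp
  have D: "((\<lambda>s. potential (g (y s))) has_real_derivative
      inverse (1 + ?p\<^sup>2) * (\<alpha> * ?r powr (\<alpha> - 1) * (- gain k ?r * ?r))) (at t)"
    unfolding potential_def using DERIV_chain2[OF DERIV_arctan DERIV_fun_powr[OF norm' r]] by simp
  have E: "inverse (1 + ?p\<^sup>2) * (\<alpha> * ?r powr (\<alpha> - 1) * (- gain k ?r * ?r)) = - (\<alpha> * k)"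
  proof -
    have "1 + ?p\<^sup>2 \<noteq> 0" by (metis add_pos_nonneg zero_less_one zero_le_power2 less_irrefl)
    have "inverse (1 + ?p\<^sup>2) * (\<alpha> * ?r powr (\<alpha> - 1) * (- gain k ?r * ?r))
        = - \<alpha> * (gain k ?r * (?r powr (\<alpha> - 1) * ?r)) / (1 + ?p\<^sup>2)"
      by (simp add: divide_inverse algebra_simps)
    also have "?r powr (\<alpha> - 1) * ?r = ?p" using r by (simp add: powr_diff)
    also have "gain k ?r * ?p = k * (1 + ?p\<^sup>2)"
      using r by (simp add: gain_def field_simps power2_eq_square)
    finally show ?thesis using \<open>1 + ?p\<^sup>2 \<noteq> 0\<close> by simp
  qed
  show ?thesis using D unfolding E .
qed

lemma potential_along_solution:
  assumes sol: "ode_solution (F k) x0 y" and "k > 0" and "0 \<le> t"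
  shows "potential (g (y t)) = max 0 (potential (g x0) - \<alpha> * k * t)"
proof -
  have "(\<lambda>s. potential (g (y s))) t = max 0 ((\<lambda>s. potential (g (y s))) 0 - \<alpha> * k * t)"
  proof (rule linear_decay_until_zero)
    show "continuous_on {0..t} (\<lambda>s. potential (g (y s)))"
      using continuous_on_compose2[OF continuous_on_potential
          continuous_on_compose2[OF continuous_on_g ode_solution_continuous[OF sol]]] by auto
    fix s assume "0 < s" "potential (g (y s)) > 0"
    then show "((\<lambda>s. potential (g (y s))) has_real_derivative - (\<alpha> * k)) (at s)"
      using g_eq_0_iff potential_pos_iff
      by (metis potential_has_real_derivative_along_solution
          ode_solution_has_vector_derivative[OF sol])
  qed (use assms alpha_pos potential_nonneg in auto)
  with sol show ?thesis by (simp add: ode_solution_def)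
qed

lemma solution_off_root_before:
  assumes sol: "ode_solution (F k) x0 y" and "k > 0" and "0 \<le> s" "s \<le> t" and "y t \<noteq> xs"
  shows "y s \<noteq> xs"
proof -
  have "potential (g (y t)) > 0"
    using \<open>y t \<noteq> xs\<close> g_eq_0_iff potential_pos_iff by simp
  then have "potential (g x0) - \<alpha> * k * t > 0"
    using potential_along_solution[OF sol \<open>k > 0\<close>, of t] assms by simp
  moreover have "\<alpha> * k * s \<le> \<alpha> * k * t"
    using assms alpha_pos by (simp add: mult_left_mono)
  ultimately have "potential (g (y s)) > 0"
    using potential_along_solution[OF sol \<open>k > 0\<close> \<open>0 \<le> s\<close>] by simp
  then show ?thesis using root potential_pos_iff by auto
qed

lemma sgn_gradient_along_solution:
  assumes sol: "ode_solution (F k) x0 y" and "k > 0" and "0 \<le> t" and "y t \<noteq> xs"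
  shows "sgn (g (y t)) = sgn (g x0)"
proof -
  have off_root: "g (y s) \<noteq> 0" if "s \<in> {0..t}" for s
    using solution_off_root_before[OF sol \<open>k > 0\<close> _ _ \<open>y t \<noteq> xs\<close>, of s] that g_eq_0_iff by auto
  have "(\<lambda>s. sgn (g (y s))) t = sgn (g (y 0))"
  proof (rule has_derivative_zero_unique_strong_interval[of "{0, t}"])
    show "continuous_on {0..t} (\<lambda>s. sgn (g (y s)))"
      using continuous_on_compose2[OF continuous_on_g ode_solution_continuous[OF sol]] off_root
      by (intro continuous_on_sgn) auto
    fix s assume s: "s \<in> {0..t} - {0, t}"
    then have "y s \<noteq> xs" using off_root g_eq_0_iff by auto
    with s have "((\<lambda>s. g (y s)) has_vector_derivative
        (- gain k (norm (g (y s)))) *\<^sub>R g (y s)) (at s)"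
      by (intro gradient_has_vector_derivative_along_solution
          ode_solution_has_vector_derivative[OF sol]) auto
    from sgn_has_vector_derivative_radial[OF this] off_root s
    have "((\<lambda>s. sgn (g (y s))) has_vector_derivative 0) (at s)" by auto
    then show "((\<lambda>s. sgn (g (y s))) has_derivative (\<lambda>h. 0)) (at s within {0..t})"
      by (auto simp: has_vector_derivative_def intro: has_derivative_at_withinI)
  qed (use \<open>0 \<le> t\<close> in auto)
  with sol show ?thesis by (simp add: ode_solution_def)
qed

text \<open>Inverting the linear decay of the potential gives the norm of the gradient along solutions.\<close>

definition radius :: "real \<Rightarrow> 'a \<Rightarrow> real \<Rightarrow> real" where
  "radius k x0 t = tan (max 0 (potential (g x0) - \<alpha> * k * t)) powr (1 / \<alpha>)"

lemma gradient_along_solution: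
  assumes sol: "ode_solution (F k) x0 y" and "k > 0" and "0 \<le> t"
  shows "g (y t) = radius k x0 t *\<^sub>R sgn (g x0)"
proof -
  have "norm (g (y t)) = radius k x0 t"
    using tan_potential_powr[of "g (y t)"] potential_along_solution[OF assms]
    by (simp add: radius_def)
  then show ?thesis
    using sgn_gradient_along_solution[OF assms] scaleR_norm_sgn[of "g (y t)"] g_eq_0_iff root
    by (cases "y t = xs") auto
qed

lemma ode_solution_unique:
  assumes "ode_solution (F k) x0 x" "ode_solution (F k) x0 y" and "k > 0" and "0 \<le> t"
  shows "y t = x t"
  using gradient_along_solution[OF assms(1) \<open>k > 0\<close> \<open>0 \<le> t\<close>]
    gradient_along_solution[OF assms(2) \<open>k > 0\<close> \<open>0 \<le> t\<close>] inj_g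
  by (metis injD)

definition settling_time :: "real \<Rightarrow> 'a \<Rightarrow> real" where
  "settling_time k x0 = potential (g x0) / (\<alpha> * k)"

lemma settling_time_bounds:
  assumes "k > 0"
  shows "0 \<le> settling_time k x0" "settling_time k x0 < pi / (2 * \<alpha> * k)"
proof -
  have "0 \<le> potential (g x0)" "potential (g x0) < pi / 2"
    using potential_nonneg arctan_bounded by (auto simp: potential_def)
  then have "potential (g x0) / (\<alpha> * k) < (pi / 2) / (\<alpha> * k)"
    using assms alpha_pos by (intro divide_strict_right_mono) auto
  then show "settling_time k x0 < pi / (2 * \<alpha> * k)" by (simp add: settling_time_def)
  show "0 \<le> settling_time k x0"
    using potential_nonneg assms alpha_pos by (simp add: settling_time_def)
qed

lemma solution_settles:
  assumes sol: "ode_solution (F k) x0 y" and "k > 0" and "settling_time k x0 \<le> t"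
  shows "y t = xs"
proof -
  have "0 \<le> t" using settling_time_bounds(1)[OF \<open>k > 0\<close>, of x0] assms(3) by linarith
  moreover have "potential (g x0) \<le> \<alpha> * k * t"
    using assms(3) \<open>k > 0\<close> alpha_pos by (simp add: settling_time_def pos_divide_le_eq mult.commute)
  ultimately have "potential (g (y t)) = 0"
    using potential_along_solution[OF sol \<open>k > 0\<close>] by simp
  then show ?thesis using potential_pos_iff g_eq_0_iff potential_nonneg by (metis less_le)
qed

lemma norm_gradient_along_solution_le:
  assumes sol: "ode_solution (F k) x0 y" and "k > 0" and "0 \<le> t"
  shows "norm (g (y t)) \<le> norm (g x0)"
  using potential_along_solution[OF assms] potential_nonneg potential_le_iff
    alpha_pos assms by (smt (verit) mult_nonneg_nonneg)

abbreviation ginv :: "'a \<Rightarrow> 'a" where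
  "ginv \<equiv> inv_into UNIV g"

lemma g_ginv [simp]: "g (ginv z) = z"
  using surj_g by (simp add: surj_f_inv_f)

lemma ginv_g [simp]: "ginv (g x) = x"
  using inj_g by (simp add: inv_f_f)

lemma ginv_has_derivative: "(ginv has_derivative Hinv (ginv z)) (at z)"
  using has_derivative_inverse_strong[of UNIV "ginv z" g ginv "blinfun_apply (H (ginv z))"
      "Hinv (ginv z)"]
  by (auto simp: continuous_on_g hess fun_eq_iff)

lemma continuous_on_ginv: "continuous_on UNIV ginv"
  using ginv_has_derivative has_derivative_continuous continuous_at_imp_continuous_on by blast

lemma radius_nonneg: "radius k x0 t \<ge> 0"
  by (simp add: radius_def)

lemma radius_0: "radius k x0 0 = norm (g x0)"
  using tan_potential_powr potential_nonneg by (simp add: radius_def)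

lemma radius_after_settling:
  assumes "k > 0" and "settling_time k x0 \<le> t"
  shows "radius k x0 t = 0"
  using assms alpha_pos by (simp add: radius_def settling_time_def pos_divide_le_eq mult.commute)

lemma norm_radius_scaleR_sgn:
  assumes "k > 0" and "0 \<le> t"
  shows "norm (radius k x0 t *\<^sub>R sgn (g x0)) = radius k x0 t"
proof (cases "g x0 = 0")
  case True
  then have "settling_time k x0 = 0" by (simp add: settling_time_def potential_def)
  then show ?thesis using radius_after_settling[OF assms(1)] assms(2) by simp
qed (simp add: norm_sgn radius_nonneg)

lemma continuous_on_radius:
  assumes "k > 0"
  shows "continuous_on {0..} (radius k x0)"
proof -
  have "continuous_on {0..} (\<lambda>t. tan (max 0 (potential (g x0) - \<alpha> * k * t)) powr (1 / \<alpha>))"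
  proof (intro continuous_on_powr' continuous_intros ballI conjI)
    fix t :: real assume "t \<in> {0..}"
    then have "0 \<le> \<alpha> * k * t" using alpha_pos assms by simp
    then have u: "0 \<le> max 0 (potential (g x0) - \<alpha> * k * t)"
        "max 0 (potential (g x0) - \<alpha> * k * t) < pi / 2"
      using arctan_bounded[of "norm (g x0) powr \<alpha>"] pi_gt_zero by (auto simp: potential_def max_def)
    have "cos (max 0 (potential (g x0) - \<alpha> * k * t)) > 0"
      by (rule cos_gt_zero_pi) (use u in linarith)+
    then show "cos (max 0 (potential (g x0) - \<alpha> * k * t)) \<noteq> 0" by simp
    show "0 \<le> tan (max 0 (potential (g x0) - \<alpha> * k * t))" using u by (rule tan_pos_pi2_le)
  qed (use alpha_pos in auto)
  then show ?thesis by (simp add: radius_def)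
qed

lemma radius_has_real_derivative_before_settling:
  assumes "k > 0" and "0 \<le> s" "s < settling_time k x0"
  shows "(radius k x0 has_real_derivative - gain k (radius k x0 s) * radius k x0 s) (at s)"
proof -
  define u where "u = potential (g x0) - \<alpha> * k * s"
  define q where "q = tan u"
  have "0 \<le> \<alpha> * k * s" "\<alpha> * k * s < potential (g x0)"
    using assms alpha_pos by (auto simp: settling_time_def pos_less_divide_eq mult.commute)
  then have u: "0 < u" "u < pi / 2"
    using arctan_bounded[of "norm (g x0) powr \<alpha>"] by (auto simp: u_def potential_def)
  then have "cos u \<noteq> 0" using cos_gt_zero_pi[of u] by simp
  have "q > 0" unfolding q_def using tan_gt_zero u by simp
  have radius_s: "radius k x0 s = q powr (1 / \<alpha>)"
    using u by (simp add: radius_def q_def u_def)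
  have "((\<lambda>s. potential (g x0) - \<alpha> * k * s) has_real_derivative - (\<alpha> * k)) (at s)"
    by (auto intro!: derivative_eq_intros)
  from DERIV_chain2[OF DERIV_tan[OF \<open>cos u \<noteq> 0\<close>, unfolded u_def] this]
  have "((\<lambda>s. tan (potential (g x0) - \<alpha> * k * s)) has_real_derivative
      inverse ((cos u)\<^sup>2) * - (\<alpha> * k)) (at s)" by (simp add: u_def)
  from DERIV_fun_powr[OF this, of "1 / \<alpha>"] \<open>q > 0\<close>
  have D: "((\<lambda>s. tan (potential (g x0) - \<alpha> * k * s) powr (1 / \<alpha>)) has_real_derivative
      1 / \<alpha> * q powr (1 / \<alpha> - 1) * (inverse ((cos u)\<^sup>2) * - (\<alpha> * k))) (at s)"
    by (simp add: q_def u_def)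
  have sec: "inverse ((cos u)\<^sup>2) = 1 + q\<^sup>2"
    using tan_sec[OF \<open>cos u \<noteq> 0\<close>] by (simp add: q_def power_inverse)
  have pow: "q powr (1 / \<alpha> - 1) = q powr (1 / \<alpha>) / q" using \<open>q > 0\<close> by (simp add: powr_diff)
  have gain_s: "gain k (radius k x0 s) = k / q + k * q"
    using \<open>q > 0\<close> alpha_pos by (simp add: gain_def radius_s powr_powr)
  have E: "1 / \<alpha> * q powr (1 / \<alpha> - 1) * (inverse ((cos u)\<^sup>2) * - (\<alpha> * k))
      = - gain k (radius k x0 s) * radius k x0 s"
    unfolding sec pow gain_s unfolding radius_s using \<open>q > 0\<close> alpha_pos
    by (simp add: field_simps power2_eq_square)
  show ?thesis
  proof (rule has_field_derivative_transform_within_open[OF D[unfolded E]])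
    show "open {..<settling_time k x0}" "s \<in> {..<settling_time k x0}" using assms by auto
    fix s' assume "s' \<in> {..<settling_time k x0}"
    then have "\<alpha> * k * s' < potential (g x0)"
      using assms alpha_pos by (simp add: settling_time_def pos_less_divide_eq mult.commute)
    then show "tan (potential (g x0) - \<alpha> * k * s') powr (1 / \<alpha>) = radius k x0 s'"
      by (simp add: radius_def)
  qed
qed

lemma radius_has_real_derivative:
  assumes "k > 0" and "0 \<le> s" "s \<noteq> settling_time k x0"
  shows "(radius k x0 has_real_derivative - gain k (radius k x0 s) * radius k x0 s) (at s)"
proof (cases "s < settling_time k x0")
  case False
  with assms have "settling_time k x0 < s" by simp
  have "((\<lambda>_. 0) has_real_derivative 0) (at s)" by simp
  then have "(radius k x0 has_real_derivative 0) (at s)"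
    by (rule has_field_derivative_transform_within_open[of _ _ _ "{settling_time k x0<..}"])
       (use \<open>settling_time k x0 < s\<close> radius_after_settling[OF \<open>k > 0\<close>] in auto)
  then show ?thesis
    using radius_after_settling[OF \<open>k > 0\<close>, of x0 s] \<open>settling_time k x0 < s\<close> by simp
qed (use assms radius_has_real_derivative_before_settling in auto)

definition flow :: "real \<Rightarrow> 'a \<Rightarrow> real \<Rightarrow> 'a" where
  "flow k x0 t = ginv (radius k x0 t *\<^sub>R sgn (g x0))"

lemma flow_0: "flow k x0 0 = x0"
  by (simp add: flow_def radius_0 scaleR_norm_sgn)

lemma continuous_on_flow:
  assumes "k > 0"
  shows "continuous_on {0..} (flow k x0)"
  unfolding flow_def using continuous_on_radius[OF assms]
  by (intro continuous_on_compose2[OF continuous_on_ginv] continuous_intros) auto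

lemma flow_has_vector_derivative:
  assumes "k > 0" and "0 \<le> s" "s \<noteq> settling_time k x0"
  shows "(flow k x0 has_vector_derivative F k (flow k x0 s)) (at s)"
proof -
  let ?c = "sgn (g x0)"
  let ?z = "radius k x0 s *\<^sub>R ?c"
  let ?d = "- gain k (radius k x0 s) * radius k x0 s"
  have "((\<lambda>s. radius k x0 s *\<^sub>R ?c) has_vector_derivative ?d *\<^sub>R ?c) (at s)"
    using has_vector_derivative_scaleR[OF radius_has_real_derivative[OF assms]
        has_vector_derivative_const]
    by simp
  from diff_chain_at[OF this[unfolded has_vector_derivative_def] ginv_has_derivative]
  have "(flow k x0 has_derivative (\<lambda>x. Hinv (ginv ?z) (x *\<^sub>R ?d *\<^sub>R ?c))) (at s)"
    by (simp add: flow_def[abs_def] o_def)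
  moreover have "Hinv (ginv ?z) (x *\<^sub>R ?d *\<^sub>R ?c) = x *\<^sub>R F k (ginv ?z)" for x
  proof -
    note L = linear_Hinv[of "ginv ?z"]
    have "x *\<^sub>R ?d *\<^sub>R ?c = - (x *\<^sub>R gain k (norm ?z) *\<^sub>R ?z)"
      unfolding norm_radius_scaleR_sgn[OF \<open>k > 0\<close> \<open>0 \<le> s\<close>] by (simp add: algebra_simps)
    then show ?thesis
      by (simp only: F_eq g_ginv linear_neg[OF L] linear_scale[OF L] scaleR_minus_right)
  qed
  ultimately show ?thesis by (simp add: has_vector_derivative_def flow_def[symmetric])
qed

lemma norm_F_flow_le:
  assumes "k > 0" and "0 \<le> s"
  shows "norm (F k (flow k x0 s)) \<le> gain k (radius k x0 s) * radius k x0 s / m"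
proof -
  let ?z = "radius k x0 s *\<^sub>R sgn (g x0)"
  have "norm (F k (flow k x0 s)) \<le> norm (gain k (norm ?z) *\<^sub>R ?z) / m"
    unfolding F_eq norm_minus_cancel flow_def g_ginv by (rule norm_Hinv_le)
  also have "norm (gain k (norm ?z) *\<^sub>R ?z) = \<bar>gain k (norm ?z)\<bar> * norm ?z"
    by (rule norm_scaleR)
  also have "\<dots> = gain k (radius k x0 s) * radius k x0 s"
    unfolding norm_radius_scaleR_sgn[OF assms] using assms by (simp add: gain_def)
  finally show ?thesis .
qed

lemma ode_solution_flow:
  assumes "k > 0"
  shows "ode_solution (F k) x0 (flow k x0)"
  unfolding ode_solution_def
proof (intro conjI allI impI flow_0)
  fix t :: real assume "0 \<le> t"
  \<comment> \<open>For \<open>\<alpha> > 1\<close> the field is unbounded near \<open>xs\<close>; absolute integrability comes from the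
    bound \<open>norm_F_flow_le\<close>, which is the derivative of \<open>- radius k x0 s / m\<close>.\<close>
  have flow_integral:
    "((\<lambda>s. F k (flow k x0 s)) has_integral (flow k x0 t - flow k x0 0)) {0..t}"
    using \<open>0 \<le> t\<close> continuous_on_subset[OF continuous_on_flow[OF \<open>k > 0\<close>]]
    by (intro fundamental_theorem_of_calculus_interior_strong[of "{settling_time k x0}"]
        flow_has_vector_derivative \<open>k > 0\<close>) auto
  have bound_integral: "((\<lambda>s. gain k (radius k x0 s) * radius k x0 s / m) has_integral
      (- radius k x0 t / m - (- radius k x0 0 / m))) {0..t}"
  proof (intro fundamental_theorem_of_calculus_interior_strong[of "{settling_time k x0}"])
    fix s assume "s \<in> {0<..<t} - {settling_time k x0}"
    then have "((\<lambda>s. - radius k x0 s / m) has_real_derivative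
        - (- gain k (radius k x0 s) * radius k x0 s) / m) (at s)"
      using \<open>k > 0\<close> by (intro DERIV_cdivide DERIV_minus radius_has_real_derivative) auto
    then show "((\<lambda>s. - radius k x0 s / m) has_vector_derivative
        gain k (radius k x0 s) * radius k x0 s / m) (at s)"
      by (simp add: has_real_derivative_iff_has_vector_derivative[symmetric])
  next
    show "continuous_on {0..t} (\<lambda>s. - radius k x0 s / m)"
      using continuous_on_subset[OF continuous_on_radius[OF \<open>k > 0\<close>]] m_pos
      by (intro continuous_intros) auto
  qed (use \<open>0 \<le> t\<close> in auto)
  show "(\<lambda>s. F k (flow k x0 s)) absolutely_integrable_on {0..t}"
  proof (rule absolutely_integrable_integrable_bound)
    show "norm (F k (flow k x0 s)) \<le> gain k (radius k x0 s) * radius k x0 s / m"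
      if "s \<in> {0..t}" for s
      using norm_F_flow_le[OF \<open>k > 0\<close>] that by simp
  qed (use flow_integral bound_integral in \<open>blast intro: has_integral_integrable\<close>)+
  show "flow k x0 t = x0 + integral {0..t} (\<lambda>s. F k (flow k x0 s))"
    using integral_unique[OF flow_integral] flow_0 by simp
qed

lemma ode_solution_exists_unique:
  assumes "k > 0"
  shows "\<exists>x. ode_solution (F k) x0 x \<and> (\<forall>y. ode_solution (F k) x0 y \<longrightarrow> (\<forall>t\<ge>0. y t = x t))"
  using ode_solution_flow[OF assms] ode_solution_unique[OF _ _ assms] by blast

lemma fixed_time_stable_F:
  assumes "k > 0" and "pi / (2 * \<alpha> * k) \<le> Tp"
  shows "fixed_time_stable (F k) xs Tp"
  unfolding fixed_time_stable_def
proof (intro conjI allI impI)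
  fix \<epsilon> :: real assume "\<epsilon> > 0"
  have "isCont g xs" using continuous_on_g by (simp add: continuous_on_eq_continuous_at)
  moreover have "m * \<epsilon> > 0" using \<open>\<epsilon> > 0\<close> m_pos by simp
  ultimately obtain \<delta> where "\<delta> > 0" and \<delta>: "\<And>x0. dist x0 xs < \<delta> \<Longrightarrow> dist (g x0) (g xs) < m * \<epsilon>"
    unfolding continuous_at_eps_delta by blast
  have "dist (y t) xs < \<epsilon>" if "ode_solution (F k) x0 y" "dist x0 xs < \<delta>" "0 \<le> t" for x0 y t
  proof -
    have "m * dist (y t) xs \<le> norm (g (y t))"
      using strongly_monotone_norm_diff_lower_bound[OF mono, of "y t" xs] root
      by (simp add: dist_norm)
    also have "\<dots> \<le> norm (g x0)" using norm_gradient_along_solution_le[OF that(1) \<open>k > 0\<close> that(3)] .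
    also have "\<dots> < m * \<epsilon>" using \<delta>[OF that(2)] root by (simp add: dist_norm)
    finally show ?thesis using m_pos by simp
  qed
  with \<open>\<delta> > 0\<close> show "\<exists>\<delta>>0. \<forall>x0 y. ode_solution (F k) x0 y \<and> dist x0 xs < \<delta>
      \<longrightarrow> (\<forall>t\<ge>0. dist (y t) xs < \<epsilon>)"
    by blast
next
  fix x0 y assume sol: "ode_solution (F k) x0 y"
  have "\<forall>\<^sub>F t in at_top. y t = xs"
    using solution_settles[OF sol \<open>k > 0\<close>] eventually_at_top_linorder by blast
  then show "(y \<longlongrightarrow> xs) at_top" by (rule tendsto_eventually)
next
  fix x0 y assume sol: "ode_solution (F k) x0 y"
  have "settling_time k x0 \<le> Tp"
    using settling_time_bounds[OF \<open>k > 0\<close>, of x0] assms(2) by linarith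
  then show "\<exists>T. 0 \<le> T \<and> T \<le> Tp \<and> (\<forall>t\<ge>T. y t = xs)"
    using settling_time_bounds(1)[OF \<open>k > 0\<close>] solution_settles[OF sol \<open>k > 0\<close>] by blast
qed

end

theorem lemma5:
  fixes f :: "'a::euclidean_space \<Rightarrow> real"
    and g :: "'a \<Rightarrow> 'a"
    and H :: "'a \<Rightarrow> 'a \<Rightarrow>\<^sub>L 'a"
    and xs :: 'a
    and \<mu> :: real
  assumes grad: "\<And>x. (f has_derivative (\<lambda>h. g x \<bullet> h)) (at x)"
    and hess: "\<And>x. (g has_derivative blinfun_apply (H x)) (at x)"
    and hess_cont: "continuous_on UNIV H"
    and sconv: "strongly_convex_on UNIV f"
    and hess_inv: "\<And>x. bij (blinfun_apply (H x))"
    and rad_unb: "filterlim (\<lambda>x. norm (g x)) at_top at_infinity"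
    and minimizer: "\<And>x. f xs \<le> f x"
    and mu: "\<mu> > 1"
  shows "(\<forall>k>0. \<forall>x0. \<exists>x. ode_solution (ft_newton_field g H \<mu> k) x0 x \<and>
            (\<forall>y. ode_solution (ft_newton_field g H \<mu> k) x0 y \<longrightarrow> (\<forall>t\<ge>0. y t = x t)))
       \<and> (\<forall>Tp>0. fixed_time_stable (ft_newton_field g H \<mu> (\<mu> * pi / (4 * Tp))) xs Tp)"
proof -
  obtain m where "strongly_monotone m g"
    using strongly_convex_on_UNIV_imp_strongly_monotone_gradient[OF sconv grad] by blast
  moreover have "g xs = 0"
  proof -
    have "(\<lambda>h. g xs \<bullet> h) = (\<lambda>h. 0)"
      by (rule differential_zero_maxmin[of xs UNIV f]) (use grad minimizer in auto)
    then show ?thesis by (metis inner_eq_zero_iff)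
  qed
  ultimately interpret newton_flow g H m \<mu> xs
    using hess hess_cont hess_inv mu by unfold_locales auto
  have "pi / (2 * \<alpha> * (\<mu> * pi / (4 * Tp))) = Tp" if "Tp > 0" for Tp
    using that mu by (simp add: \<alpha>_def)
  then show ?thesis
    using ode_solution_exists_unique fixed_time_stable_F mu
    by (auto simp: divide_pos_pos)
qed

end
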